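(* Fix $\rho\in(0,1)$. For each $n$ let $X=(X_1,\dots,X_n)'$ be jointly normal with $E[X_i]=0$, $E[X_i^2]=1$ and $\operatorname{Corr}(X_i,X_j)=\rho$ for $i\neq j$, and let $M_n(X)=\max(X_1,\dots,X_n)$. Let $\widehat\rho=\widehat\rho_n$ be an estimator (a measurable function of $X$ with values in $[0,1)$) satisfying $\sqrt{2\ln n}\,\big(\sqrt{1-\rho}-\sqrt{1-\widehat\rho}\big)\xrightarrow{P}0$. Then $$\left|\int_{-\infty}^{\infty}\left(\Phi^n\!\left(\frac{x\sqrt{\rho}+M_n(X)}{\sqrt{1-\rho}}\right)-\Phi^n\!\left(\frac{x\sqrt{\widehat\rho}+M_n(X)}{\sqrt{1-\widehat\rho}}\right)\right)\phi(x)\,dx\right|\xrightarrow[n\to\infty]{P}0,$$ so that the one-sided $p$-value $1-\int\Phi^n\big((x\sqrt{r}+M_n(X))/\sqrt{1-r}\big)\phi(x)dx$ evaluated at $r=\widehat\rho$ minus the same quantity at $r=\rho$ converges to $0$ in probability.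
   Context: $\Phi$ and $\phi$ denote the standard normal cumulative distribution function and density; $\Phi^n$ is the $n$-th power of $\Phi$. The correlation $\rho$ does not depend on $n$. *)

theory Defs
  imports "HOL-Probability.Probability"
begin

definition phi :: "real \<Rightarrow> real" where
  "phi x = std_normal_density x"

definition Phi :: "real \<Rightarrow> real" where
  "Phi x = (\<integral>t. indicator {..x} t * std_normal_density t \<partial>lborel)"

definition normal_rv :: "'a measure \<Rightarrow> ('a \<Rightarrow> real) \<Rightarrow> bool" where
  "normal_rv M Y \<longleftrightarrow> Y \<in> borel_measurable M \<and>
     (\<exists>\<mu> \<sigma>. (\<sigma> = 0 \<and> (AE \<omega> in M. Y \<omega> = \<mu>)) \<or>
             (\<sigma> > 0 \<and> distributed M lborel Y (normal_density \<mu> \<sigma>)))"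

definition jointly_normal :: "'a measure \<Rightarrow> nat \<Rightarrow> (nat \<Rightarrow> 'a \<Rightarrow> real) \<Rightarrow> bool" where
  "jointly_normal M n X \<longleftrightarrow>
     (\<forall>a :: nat \<Rightarrow> real. normal_rv M (\<lambda>\<omega>. \<Sum>i<n. a i * X i \<omega>))"

definition conv_prob_zero :: "(nat \<Rightarrow> 'a measure) \<Rightarrow> (nat \<Rightarrow> 'a \<Rightarrow> real) \<Rightarrow> bool" where
  "conv_prob_zero M Y \<longleftrightarrow>
     (\<forall>e>0. (\<lambda>n. measure (M n) {\<omega> \<in> space (M n). \<bar>Y n \<omega>\<bar> > e}) \<longlonglongrightarrow> 0)"

end

theory Submission
  imports Defs
begin

(*
  The bound is deterministic and uniform in the value m of the maximum, so of the hypotheses on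
  X only measurability is needed.  With B = 2 sqrt (2 ln n), Chernoff bounds give Phi(-B)^n + 1 - Phi(B)^n <= 2/n, so
  arguments of Phi^n outside [-B, B] are negligible; restricting also x to [-K, K] costs only a
  Gaussian tail.  On the remaining range, replacing rho by r moves the argument by at most
  B |sqrt (1 - rho) - sqrt (1 - r)| + K |sqrt rho - sqrt r|, which the consistency of the
  estimator makes small compared to sqrt r; this is absorbed by translating x by a small Delta,
  and translating a [0,1]-valued integrand against phi changes the integral by at most Delta.
*)

lemma integrable_phi [simp]: "integrable lborel phi"
  unfolding phi_def [abs_def] by simp

lemma borel_measurable_phi [measurable]: "phi \<in> borel_measurable borel"
  unfolding phi_def [abs_def] by simp

lemma phi_nonneg: "0 \<le> phi x"
  unfolding phi_def by simp

lemma integral_phi: "(\<integral>x. phi x \<partial>lborel) = 1"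
  using integral_std_normal_moment_even [of 0] unfolding phi_def [abs_def] by simp

lemma phi_le_1: "phi x \<le> 1"
proof -
  have "1 \<le> sqrt (2 * pi)"
    using pi_gt3 by (simp add: real_le_rsqrt)
  then show ?thesis
    unfolding phi_def std_normal_density_def
    by (simp add: divide_le_eq order_trans [OF _ \<open>1 \<le> sqrt (2 * pi)\<close>])
qed

lemma phi_antimono_abs: "\<bar>b\<bar> \<le> \<bar>a\<bar> \<Longrightarrow> phi a \<le> phi b"
  unfolding phi_def std_normal_density_def
  by (simp add: divide_right_mono abs_le_square_iff)

lemma exp_mult_phi: "exp (a * x) * phi x = exp (a\<^sup>2 / 2) * phi (x - a)"
proof -
  have "a * x + - x\<^sup>2 / 2 = a\<^sup>2 / 2 + - (x - a)\<^sup>2 / 2"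
    by (simp add: power2_eq_square field_simps)
  then show ?thesis
    unfolding phi_def std_normal_density_def by (simp add: exp_add [symmetric] mult.left_commute)
qed

lemma lborel_integral_translate:
  fixes f :: "real \<Rightarrow> real"
  shows "(\<integral>x. f (x + t) \<partial>lborel) = (\<integral>x. f x \<partial>lborel)"
  using lborel_integral_real_affine [of 1 f t] by (simp add: add.commute)

lemma integrable_bounded_mult_phi_translate:
  assumes [measurable]: "h \<in> borel_measurable borel" and h: "\<And>x. \<bar>h x\<bar> \<le> 1"
  shows "integrable lborel (\<lambda>x. h x * phi (x - t))"
proof (rule Bochner_Integration.integrable_bound)
  show "integrable lborel (\<lambda>x. phi (- t + 1 * x))"
    by (rule lborel_integrable_real_affine) simp_all
  show "AE x in lborel. norm (h x * phi (x - t)) \<le> norm (phi (- t + 1 * x))"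
    using h phi_nonneg by (auto simp: abs_mult intro!: mult_left_le_one_le)
qed simp

lemma integrable_bounded_mult_phi:
  "h \<in> borel_measurable borel \<Longrightarrow> (\<And>x. \<bar>h x\<bar> \<le> 1) \<Longrightarrow> integrable lborel (\<lambda>x. h x * phi x)"
  using integrable_bounded_mult_phi_translate [of h 0] by simp

lemma integrable_indicator_mult_phi:
  "A \<in> sets borel \<Longrightarrow> integrable lborel (\<lambda>x. indicator A x * phi x)"
  by (rule integrable_bounded_mult_phi) (auto simp: indicator_def)

lemma integrable_exp_mult_phi: "integrable lborel (\<lambda>x. exp (a * x) * phi x)"
  using integrable_bounded_mult_phi_translate [of "\<lambda>_. 1" a] unfolding exp_mult_phi by simp

lemma integral_exp_mult_phi: "(\<integral>x. exp (a * x) * phi x \<partial>lborel) = exp (a\<^sup>2 / 2)"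
  using lborel_integral_translate [of phi "- a"] unfolding exp_mult_phi by (simp add: integral_phi)

lemma Phi_eq_integral: "Phi x = (\<integral>t. indicator {..x} t * phi t \<partial>lborel)"
  unfolding Phi_def phi_def ..

lemma Phi_nonneg: "0 \<le> Phi x"
  unfolding Phi_eq_integral by (rule integral_nonneg_AE) (simp add: phi_nonneg)

lemma Phi_mono: "a \<le> b \<Longrightarrow> Phi a \<le> Phi b"
  unfolding Phi_eq_integral
  by (rule integral_mono [OF integrable_indicator_mult_phi integrable_indicator_mult_phi])
     (auto simp: phi_nonneg indicator_def)

lemma borel_measurable_Phi [measurable]: "Phi \<in> borel_measurable borel"
  by (rule borel_measurable_mono) (simp add: mono_def Phi_mono)

lemma one_minus_Phi: "1 - Phi x = (\<integral>t. indicator {x<..} t * phi t \<partial>lborel)"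
proof -
  have "indicator {x<..} t * phi t = phi t - indicator {..x} t * phi t" for t
    by (simp add: indicator_def)
  then show ?thesis
    unfolding Phi_eq_integral
    by (simp add: Bochner_Integration.integral_diff integrable_indicator_mult_phi integral_phi)
qed

lemma Phi_le_1: "Phi x \<le> 1"
proof -
  have "0 \<le> (\<integral>t. indicator {x<..} t * phi t \<partial>lborel)"
    by (rule integral_nonneg_AE) (simp add: phi_nonneg)
  then show ?thesis
    unfolding one_minus_Phi [symmetric] by simp
qed

lemma Phi_diff_le:
  assumes "a \<le> b"
  shows "Phi b - Phi a \<le> b - a"
proof -
  have "Phi b - Phi a = (\<integral>t. indicator {..b} t * phi t - indicator {..a} t * phi t \<partial>lborel)"
    unfolding Phi_eq_integral
    by (rule Bochner_Integration.integral_diff [symmetric]) (simp_all add: integrable_indicator_mult_phi)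
  also have "\<dots> = (\<integral>t. indicator {a<..b} t * phi t \<partial>lborel)"
    using assms by (intro Bochner_Integration.integral_cong) (auto simp: indicator_def)
  also have "\<dots> \<le> (\<integral>t. indicator {a<..b} t \<partial>lborel)"
    using assms by (intro integral_mono integrable_indicator_mult_phi integrable_real_indicator)
      (auto simp: phi_le_1 indicator_def)
  also have "\<dots> = b - a"
    using assms by simp
  finally show ?thesis .
qed

lemma integral_indicator_mult_phi_le_exp:
  assumes [measurable]: "S \<in> sets borel" and S: "\<And>t. t \<in> S \<Longrightarrow> a\<^sup>2 \<le> a * t"
  shows "(\<integral>t. indicator S t * phi t \<partial>lborel) \<le> exp (- a\<^sup>2 / 2)"
proof -
  have "indicator S t \<le> exp (- a\<^sup>2) * exp (a * t)" for t
    using S [of t] by (auto simp: indicator_def exp_add [symmetric])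
  then have "(\<integral>t. indicator S t * phi t \<partial>lborel) \<le> (\<integral>t. exp (- a\<^sup>2) * (exp (a * t) * phi t) \<partial>lborel)"
    by (intro integral_mono integrable_indicator_mult_phi integrable_mult_right integrable_exp_mult_phi)
       (auto simp: mult.assoc [symmetric] intro!: mult_right_mono phi_nonneg)
  also have "\<dots> = exp (- a\<^sup>2 / 2)"
    by (simp add: integral_exp_mult_phi exp_add [symmetric])
  finally show ?thesis .
qed

lemma Phi_upper_tail_le: "0 \<le> y \<Longrightarrow> 1 - Phi y \<le> exp (- y\<^sup>2 / 2)"
  unfolding one_minus_Phi
  by (rule integral_indicator_mult_phi_le_exp) (auto simp: power2_eq_square intro: mult_left_mono)

lemma Phi_lower_tail_le:
  assumes "0 \<le> y"
  shows "Phi (- y) \<le> exp (- y\<^sup>2 / 2)"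
proof -
  have "y\<^sup>2 \<le> - y * t" if "t \<in> {..- y}" for t
    using that assms mult_left_mono [of y "- t" y] by (simp add: power2_eq_square)
  then show ?thesis
    unfolding Phi_eq_integral using integral_indicator_mult_phi_le_exp [of "{..- y}" "- y"] by simp
qed

lemma integral_translate_mult_phi_le:
  assumes "0 \<le> \<Delta>" and [measurable]: "g \<in> borel_measurable borel"
    and g: "\<And>x. 0 \<le> g x" "\<And>x. g x \<le> 1"
  shows "(\<integral>x. g (x + \<Delta>) * phi x \<partial>lborel) \<le> (\<integral>x. g x * phi x \<partial>lborel) + \<Delta>"
proof -
  \<comment> \<open>where the translated density \<open>phi (y - \<Delta>)\<close> exceeds \<open>phi y\<close>\<close>
  define T where "T = {\<Delta> / 2<..}"
  have [measurable]: "T \<in> sets borel"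
    by (simp add: T_def)
  have g_abs: "\<bar>g x\<bar> \<le> 1" for x
    using g [of x] by simp
  have T_abs: "\<bar>indicator T x :: real\<bar> \<le> 1" for x
    by (simp add: indicator_def)
  note integrable =
    integrable_bounded_mult_phi [of g, OF _ g_abs]
    integrable_bounded_mult_phi_translate [of g, OF _ g_abs]
    integrable_bounded_mult_phi [of "indicator T", OF _ T_abs]
    integrable_bounded_mult_phi_translate [of "indicator T", OF _ T_abs]
  have "(\<integral>x. g (x + \<Delta>) * phi x \<partial>lborel) = (\<integral>y. g y * phi (y - \<Delta>) \<partial>lborel)"
    using lborel_integral_translate [of "\<lambda>y. g y * phi (y - \<Delta>)" \<Delta>] by simp
  also have "\<dots> \<le> (\<integral>y. g y * phi y + (indicator T y * phi (y - \<Delta>) - indicator T y * phi y) \<partial>lborel)"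
  proof (rule integral_mono)
    fix y
    show "g y * phi (y - \<Delta>) \<le> g y * phi y + (indicator T y * phi (y - \<Delta>) - indicator T y * phi y)"
    proof (cases "y \<in> T")
      case True
      then have "phi y \<le> phi (y - \<Delta>)"
        using assms(1) by (intro phi_antimono_abs) (auto simp: T_def)
      then have "g y * (phi (y - \<Delta>) - phi y) \<le> phi (y - \<Delta>) - phi y"
        using g [of y] by (simp add: mult_left_le_one_le)
      then show ?thesis
        using True by (simp add: algebra_simps)
    next
      case False
      then have "phi (y - \<Delta>) \<le> phi y"
        using assms(1) by (intro phi_antimono_abs) (auto simp: T_def)
      then show ?thesis
        using False g [of y] by (simp add: mult_left_mono)
    qed
  qed (use integrable in simp_all)
  also have "\<dots> = (\<integral>y. g y * phi y \<partial>lborel) + ((1 - Phi (- \<Delta> / 2)) - (1 - Phi (\<Delta> / 2)))"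
  proof -
    have "(\<integral>y. indicator T y * phi (y - \<Delta>) \<partial>lborel) = (\<integral>x. indicator T (x + \<Delta>) * phi x \<partial>lborel)"
      using lborel_integral_translate [of "\<lambda>y. indicator T y * phi (y - \<Delta>)" \<Delta>] by simp
    also have "\<dots> = 1 - Phi (- \<Delta> / 2)"
      unfolding one_minus_Phi by (rule Bochner_Integration.integral_cong) (auto simp: T_def indicator_def)
    finally have "(\<integral>y. indicator T y * phi (y - \<Delta>) \<partial>lborel) = 1 - Phi (- \<Delta> / 2)" .
    then show ?thesis
      using integrable by (simp add: one_minus_Phi T_def)
  qed
  also have "\<dots> \<le> (\<integral>y. g y * phi y \<partial>lborel) + \<Delta>"
    using Phi_diff_le [of "- \<Delta> / 2" "\<Delta> / 2"] assms(1) by simp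
  finally show ?thesis .
qed

lemma one_minus_power_le: "0 \<le> a \<Longrightarrow> 1 - a ^ n \<le> real n * (1 - a)"
  using Bernoulli_inequality [of "a - 1" n] by (simp add: algebra_simps)

lemma Phi_tails_le:
  assumes "2 \<le> K"
  shows "Phi (- K) + (1 - Phi K) \<le> 2 / K"
proof -
  have "K \<le> K\<^sup>2 / 2"
    using assms mult_right_mono [of 2 K K] by (simp add: power2_eq_square)
  also have "\<dots> \<le> exp (K\<^sup>2 / 2)"
    using exp_ge_add_one_self [of "K\<^sup>2 / 2"] by linarith
  finally have "exp (- K\<^sup>2 / 2) \<le> 1 / K"
    using assms by (simp add: exp_minus field_simps)
  then show ?thesis
    using Phi_lower_tail_le [of K] Phi_upper_tail_le [of K] assms by simp
qed

lemma Phi_pow_tails_le: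
  assumes "1 \<le> n"
  defines "B \<equiv> 2 * sqrt (2 * ln (real n))"
  shows "Phi (- B) ^ n + (1 - Phi B ^ n) \<le> 2 / real n"
proof -
  have ln_n: "0 \<le> ln (real n)"
    using assms by simp
  then have "0 \<le> B"
    by (simp add: B_def)
  have "B\<^sup>2 / 2 = real 4 * ln (real n)"
    using ln_n by (simp add: B_def power_mult_distrib)
  also have "exp \<dots> = real n ^ 4"
    using assms by (subst exp_of_nat_mult) simp
  finally have tail: "exp (- B\<^sup>2 / 2) = 1 / real n ^ 4"
    by (simp add: exp_minus inverse_eq_divide)
  have n1: "1 \<le> real n"
    using assms by simp
  have "real n ^ 2 \<le> real n ^ 4" "real n ^ 1 \<le> real n ^ 4"
    using n1 by (intro power_increasing; simp)+
  then have n4: "real n * (1 / real n ^ 4) \<le> 1 / real n" "1 / real n ^ 4 \<le> 1 / real n"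
    using n1 by (simp_all add: field_simps power2_eq_square)
  have "Phi (- B) ^ n \<le> Phi (- B)"
    using assms Phi_nonneg Phi_le_1 by (simp add: power_decreasing [of 1 n, simplified])
  also have "\<dots> \<le> 1 / real n ^ 4"
    using Phi_lower_tail_le [OF \<open>0 \<le> B\<close>] tail by simp
  finally have lower: "Phi (- B) ^ n \<le> 1 / real n"
    using n4 by linarith
  have "1 - Phi B ^ n \<le> real n * (1 - Phi B)"
    by (rule one_minus_power_le) (rule Phi_nonneg)
  also have "\<dots> \<le> real n * (1 / real n ^ 4)"
    using Phi_upper_tail_le [OF \<open>0 \<le> B\<close>] tail by (intro mult_left_mono) simp_all
  finally show ?thesis
    using lower n4 by simp
qed

lemma abs_diff_le_abs_sqrt_one_minus_diff:
  fixes a b :: real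
  assumes "0 \<le> a" "a \<le> 1" "0 \<le> b" "b \<le> 1"
  shows "\<bar>a - b\<bar> \<le> 2 * \<bar>sqrt (1 - a) - sqrt (1 - b)\<bar>"
proof -
  have "a - b = (sqrt (1 - b) - sqrt (1 - a)) * (sqrt (1 - b) + sqrt (1 - a))"
    using assms by (simp add: algebra_simps)
  then have "\<bar>a - b\<bar> = \<bar>sqrt (1 - a) - sqrt (1 - b)\<bar> * (sqrt (1 - b) + sqrt (1 - a))"
    using assms by (simp add: abs_mult abs_minus_commute)
  also have "\<dots> \<le> \<bar>sqrt (1 - a) - sqrt (1 - b)\<bar> * 2"
  proof (rule mult_left_mono)
    have "sqrt (1 - b) \<le> 1" "sqrt (1 - a) \<le> 1"
      using assms by simp_all
    then show "sqrt (1 - b) + sqrt (1 - a) \<le> 2"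
      by linarith
  qed simp
  finally show ?thesis
    by simp
qed

lemma abs_sqrt_diff_le:
  fixes a b s :: real
  assumes "0 \<le> a" "0 \<le> b" "s \<le> sqrt a"
  shows "s * \<bar>sqrt a - sqrt b\<bar> \<le> \<bar>a - b\<bar>"
proof -
  have "a - b = (sqrt a - sqrt b) * (sqrt a + sqrt b)"
    using assms by (simp add: algebra_simps)
  then have "\<bar>a - b\<bar> = \<bar>sqrt a - sqrt b\<bar> * (sqrt a + sqrt b)"
    using assms by (simp add: abs_mult)
  moreover have "s * \<bar>sqrt a - sqrt b\<bar> \<le> (sqrt a + sqrt b) * \<bar>sqrt a - sqrt b\<bar>"
    using assms by (intro mult_right_mono) (simp_all add: add_increasing2)
  ultimately show ?thesis
    by (simp add: mult.commute)
qed

(*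
  For 0 <= r < 1, equicorr_max_cdf n r m is the distribution function at m of the maximum of n
  standard normals with common correlation r: write X_i = sqrt r Z + sqrt (1 - r) xi_i with
  independent standard normals Z, xi_i and condition on Z = - x.
*)
definition equicorr_arg :: "real \<Rightarrow> real \<Rightarrow> real \<Rightarrow> real" where
  "equicorr_arg r m x = (x * sqrt r + m) / sqrt (1 - r)"

definition equicorr_max_cdf :: "nat \<Rightarrow> real \<Rightarrow> real \<Rightarrow> real" where
  "equicorr_max_cdf n r m = (\<integral>x. Phi (equicorr_arg r m x) ^ n * phi x \<partial>lborel)"

lemma borel_measurable_equicorr_arg [measurable]: "equicorr_arg r m \<in> borel_measurable borel"
  unfolding equicorr_arg_def [abs_def] by simp

lemma integrable_Phi_pow_mult_phi:
  "f \<in> borel_measurable borel \<Longrightarrow> integrable lborel (\<lambda>x. Phi (f x) ^ n * phi x)"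
  by (rule integrable_bounded_mult_phi) (simp_all add: Phi_nonneg Phi_le_1 power_le_one)

lemma Phi_pow_equicorr_arg_le:
  assumes p: "0 \<le> p" "p < 1" and q: "0 \<le> q" "q < 1" and "0 \<le> B" "\<bar>x\<bar> \<le> K"
    and close: "B * \<bar>sqrt (1 - p) - sqrt (1 - q)\<bar> + K * \<bar>sqrt p - sqrt q\<bar> \<le> \<Delta> * sqrt q"
  shows "Phi (equicorr_arg p m x) ^ n
    \<le> Phi (equicorr_arg q m (x + \<Delta>)) ^ n + (Phi (- B) ^ n + (1 - Phi B ^ n))"
proof (cases "equicorr_arg p m x \<le> - B")
  case True
  then have "Phi (equicorr_arg p m x) ^ n \<le> Phi (- B) ^ n"
    by (simp add: Phi_mono Phi_nonneg power_mono)
  moreover have "0 \<le> Phi (equicorr_arg q m (x + \<Delta>)) ^ n" "0 \<le> 1 - Phi B ^ n"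
    by (simp_all add: Phi_nonneg Phi_le_1 power_le_one)
  ultimately show ?thesis
    by linarith
next
  case False
  \<comment> \<open>above \<open>B\<close>, \<open>Phi\<^sup>n\<close> is within \<open>1 - Phi B ^ n\<close> of 1, so the argument may be clipped at \<open>B\<close>\<close>
  define u where "u = min B (equicorr_arg p m x)"
  have "\<bar>u\<bar> \<le> B"
    using False \<open>0 \<le> B\<close> by (auto simp: u_def)
  have "u \<le> equicorr_arg p m x"
    by (simp add: u_def)
  then have "u * sqrt (1 - p) \<le> x * sqrt p + m"
    using p by (simp add: equicorr_arg_def pos_le_divide_eq)
  moreover have "u * (sqrt (1 - q) - sqrt (1 - p)) \<le> B * \<bar>sqrt (1 - p) - sqrt (1 - q)\<bar>"
    using abs_ge_self [of "u * (sqrt (1 - q) - sqrt (1 - p))"]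
      mult_right_mono [OF \<open>\<bar>u\<bar> \<le> B\<close> abs_ge_zero [of "sqrt (1 - p) - sqrt (1 - q)"]]
    by (simp add: abs_mult abs_minus_commute)
  moreover have "x * (sqrt p - sqrt q) \<le> K * \<bar>sqrt p - sqrt q\<bar>"
    using abs_ge_self [of "x * (sqrt p - sqrt q)"]
      mult_right_mono [OF \<open>\<bar>x\<bar> \<le> K\<close> abs_ge_zero [of "sqrt p - sqrt q"]]
    by (simp add: abs_mult)
  ultimately have "u * sqrt (1 - q) \<le> (x + \<Delta>) * sqrt q + m"
    using close by (simp add: algebra_simps)
  then have "u \<le> equicorr_arg q m (x + \<Delta>)"
    using q by (simp add: equicorr_arg_def pos_le_divide_eq)
  then have "Phi u ^ n \<le> Phi (equicorr_arg q m (x + \<Delta>)) ^ n"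
    by (simp add: Phi_mono Phi_nonneg power_mono)
  moreover have "Phi (equicorr_arg p m x) ^ n \<le> Phi u ^ n + (1 - Phi B ^ n)"
    using Phi_le_1 Phi_nonneg by (simp add: u_def min_def power_le_one)
  moreover have "0 \<le> Phi (- B) ^ n"
    by (simp add: Phi_nonneg)
  ultimately show ?thesis
    by linarith
qed

lemma equicorr_max_cdf_le:
  assumes p: "0 \<le> p" "p < 1" and q: "0 \<le> q" "q < 1" and "0 \<le> B" "0 \<le> \<Delta>"
    and close: "B * \<bar>sqrt (1 - p) - sqrt (1 - q)\<bar> + K * \<bar>sqrt p - sqrt q\<bar> \<le> \<Delta> * sqrt q"
  shows "equicorr_max_cdf n p m
    \<le> equicorr_max_cdf n q m + \<Delta> + (Phi (- B) ^ n + (1 - Phi B ^ n)) + (Phi (- K) + (1 - Phi K))"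
proof -
  define tails where "tails = Phi (- B) ^ n + (1 - Phi B ^ n)"
  have "0 \<le> tails"
    using Phi_nonneg Phi_le_1 by (simp add: tails_def power_le_one)
  have bound: "Phi (equicorr_arg p m x) ^ n
      \<le> Phi (equicorr_arg q m (x + \<Delta>)) ^ n + tails + indicator {..- K} x + indicator {K<..} x" for x
  proof (cases "\<bar>x\<bar> \<le> K")
    case True
    have "0 \<le> indicator {..- K} x + (indicator {K<..} x :: real)"
      by simp
    then show ?thesis
      using Phi_pow_equicorr_arg_le [OF p q \<open>0 \<le> B\<close> True close, of m n]
      unfolding tails_def by linarith
  next
    case False
    then have "1 \<le> indicator {..- K} x + (indicator {K<..} x :: real)"
      by (auto simp: indicator_def)
    moreover have "Phi (equicorr_arg p m x) ^ n \<le> 1" "0 \<le> Phi (equicorr_arg q m (x + \<Delta>)) ^ n"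
      by (simp_all add: Phi_nonneg Phi_le_1 power_le_one)
    ultimately show ?thesis
      using \<open>0 \<le> tails\<close> by linarith
  qed
  have "equicorr_max_cdf n p m \<le> (\<integral>x. Phi (equicorr_arg q m (x + \<Delta>)) ^ n * phi x + tails * phi x
      + indicator {..- K} x * phi x + indicator {K<..} x * phi x \<partial>lborel)"
    unfolding equicorr_max_cdf_def
  proof (rule integral_mono)
    fix x
    show "Phi (equicorr_arg p m x) ^ n * phi x \<le> Phi (equicorr_arg q m (x + \<Delta>)) ^ n * phi x
        + tails * phi x + indicator {..- K} x * phi x + indicator {K<..} x * phi x"
      using mult_right_mono [OF bound [of x] phi_nonneg [of x]] by (simp add: distrib_right)
  qed (simp_all add: integrable_Phi_pow_mult_phi integrable_indicator_mult_phi)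
  also have "\<dots> = (\<integral>x. Phi (equicorr_arg q m (x + \<Delta>)) ^ n * phi x \<partial>lborel)
      + tails + Phi (- K) + (1 - Phi K)"
    by (simp add: integrable_Phi_pow_mult_phi integrable_indicator_mult_phi integral_phi
        Phi_eq_integral [of "- K", symmetric] one_minus_Phi [of K, symmetric])
  also have "(\<integral>x. Phi (equicorr_arg q m (x + \<Delta>)) ^ n * phi x \<partial>lborel) \<le> equicorr_max_cdf n q m + \<Delta>"
    unfolding equicorr_max_cdf_def
    by (rule integral_translate_mult_phi_le [OF \<open>0 \<le> \<Delta>\<close>])
      (simp_all add: Phi_nonneg Phi_le_1 power_le_one)
  finally show ?thesis
    by (simp add: tails_def)
qed

lemma abs_equicorr_max_cdf_diff_le:
  assumes "0 \<le> p" "p < 1" "0 \<le> q" "q < 1" "0 \<le> B" "0 \<le> \<Delta>"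
    and "B * \<bar>sqrt (1 - p) - sqrt (1 - q)\<bar> + K * \<bar>sqrt p - sqrt q\<bar> \<le> \<Delta> * min (sqrt p) (sqrt q)"
  shows "\<bar>equicorr_max_cdf n p m - equicorr_max_cdf n q m\<bar>
    \<le> \<Delta> + (Phi (- B) ^ n + (1 - Phi B ^ n)) + (Phi (- K) + (1 - Phi K))"
proof -
  have "\<Delta> * min (sqrt p) (sqrt q) \<le> \<Delta> * sqrt p" "\<Delta> * min (sqrt p) (sqrt q) \<le> \<Delta> * sqrt q"
    using \<open>0 \<le> \<Delta>\<close> by (simp_all add: mult_left_mono)
  then show ?thesis
    using assms equicorr_max_cdf_le [of p q B \<Delta> K n m] equicorr_max_cdf_le [of q p B \<Delta> K n m]
    by (simp add: abs_minus_commute)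
qed

lemma equicorr_max_cdf_uniformly_close:
  assumes "0 < \<rho>" "\<rho> < 1" "0 < e"
  shows "\<exists>\<eta>>0. \<forall>\<^sub>F n in sequentially. \<forall>r m. 0 \<le> r \<longrightarrow> r < 1 \<longrightarrow>
    \<bar>sqrt (2 * ln (real n)) * (sqrt (1 - \<rho>) - sqrt (1 - r))\<bar> \<le> \<eta> \<longrightarrow>
    \<bar>equicorr_max_cdf n \<rho> m - equicorr_max_cdf n r m\<bar> \<le> e"
proof -
  define K where "K = 2 + 8 / e"
  define s where "s = sqrt (\<rho> / 2)"
  define \<eta> where "\<eta> = min (\<rho> / 4) (e / 4 * s / (2 + 2 * K / s))"
  have "0 < s" "2 \<le> K"
    using assms by (simp_all add: s_def K_def)
  then have "0 < \<eta>"
    using assms by (simp add: \<eta>_def add_pos_nonneg)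
  have close: "\<bar>equicorr_max_cdf n \<rho> m - equicorr_max_cdf n r m\<bar> \<le> e"
    if n: "3 \<le> n" "8 / e \<le> real n" and r: "0 \<le> r" "r < 1"
      and small: "\<bar>sqrt (2 * ln (real n)) * (sqrt (1 - \<rho>) - sqrt (1 - r))\<bar> \<le> \<eta>" for n r m
  proof -
    define c where "c = sqrt (2 * ln (real n))"
    define \<delta> where "\<delta> = \<bar>sqrt (1 - \<rho>) - sqrt (1 - r)\<bar>"
    have "ln 3 \<le> ln (real n)"
      using n(1) by simp
    then have "1 \<le> ln (real n)"
      using ln3_gt_1 by linarith
    then have "1 \<le> c"
      by (simp add: c_def real_le_rsqrt)
    have "c * \<delta> \<le> \<eta>"
      using small [folded c_def] \<open>1 \<le> c\<close> by (simp add: \<delta>_def abs_mult)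
    moreover have "\<delta> \<le> c * \<delta>"
      using \<open>1 \<le> c\<close> by (simp add: \<delta>_def mult_le_cancel_right1)
    ultimately have "\<delta> \<le> \<eta>"
      by linarith
    then have "\<bar>\<rho> - r\<bar> \<le> 2 * \<eta>"
      using abs_diff_le_abs_sqrt_one_minus_diff [of \<rho> r] assms r by (simp add: \<delta>_def)
    then have "\<rho> / 2 \<le> r"
      by (simp add: \<eta>_def)
    then have "s \<le> sqrt r" "s \<le> sqrt \<rho>"
      using assms by (simp_all add: s_def)
    then have "s * \<bar>sqrt \<rho> - sqrt r\<bar> \<le> 2 * \<eta>"
      using abs_sqrt_diff_le [of \<rho> r s] assms r \<open>\<bar>\<rho> - r\<bar> \<le> 2 * \<eta>\<close> by simp
    then have "K * \<bar>sqrt \<rho> - sqrt r\<bar> \<le> K * (2 * \<eta> / s)"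
      using \<open>0 < s\<close> \<open>2 \<le> K\<close> by (intro mult_left_mono) (simp_all add: field_simps)
    then have "2 * c * \<delta> + K * \<bar>sqrt \<rho> - sqrt r\<bar> \<le> \<eta> * (2 + 2 * K / s)"
      using \<open>c * \<delta> \<le> \<eta>\<close> by (simp add: algebra_simps)
    also have "\<dots> \<le> e / 4 * s"
    proof -
      have "0 < 2 + 2 * K / s"
        using \<open>0 < s\<close> \<open>2 \<le> K\<close> by (simp add: add_pos_nonneg)
      moreover have "\<eta> \<le> e / 4 * s / (2 + 2 * K / s)"
        unfolding \<eta>_def by (rule min.cobounded2)
      ultimately show ?thesis
        by (simp only: pos_le_divide_eq)
    qed
    also have "\<dots> \<le> e / 4 * min (sqrt \<rho>) (sqrt r)"
      using \<open>s \<le> sqrt r\<close> \<open>s \<le> sqrt \<rho>\<close> assms by (intro mult_left_mono) simp_all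
    finally have "\<bar>equicorr_max_cdf n \<rho> m - equicorr_max_cdf n r m\<bar>
        \<le> e / 4 + (Phi (- (2 * c)) ^ n + (1 - Phi (2 * c) ^ n)) + (Phi (- K) + (1 - Phi K))"
      using assms r \<open>1 \<le> c\<close>
      by (intro abs_equicorr_max_cdf_diff_le) (simp_all add: \<delta>_def)
    moreover have "Phi (- (2 * c)) ^ n + (1 - Phi (2 * c) ^ n) \<le> e / 4"
    proof -
      have "2 / real n \<le> e / 4"
        using n assms by (simp add: field_simps)
      then show ?thesis
        using Phi_pow_tails_le [of n] n(1) unfolding c_def by linarith
    qed
    moreover have "Phi (- K) + (1 - Phi K) \<le> e / 4"
    proof -
      have "2 / K \<le> e / 4"
        using assms by (simp add: K_def field_simps)
      then show ?thesis
        using Phi_tails_le [OF \<open>2 \<le> K\<close>] by linarith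
    qed
    ultimately show ?thesis
      by linarith
  qed
  have "\<forall>\<^sub>F n in sequentially. 3 \<le> n \<and> 8 / e \<le> real n"
    by (intro eventually_conj eventually_ge_at_top eventually_sequentiallyI [of "nat \<lceil>8 / e\<rceil>"])
      linarith
  then show ?thesis
    using \<open>0 < \<eta>\<close> close by (auto elim!: eventually_mono)
qed

lemma equicorr_max_cdf_diff:
  "equicorr_max_cdf n p m - equicorr_max_cdf n q m =
    (\<integral>x. (Phi ((x * sqrt p + m) / sqrt (1 - p)) ^ n - Phi ((x * sqrt q + m) / sqrt (1 - q)) ^ n)
      * phi x \<partial>lborel)"
  unfolding equicorr_max_cdf_def equicorr_arg_def left_diff_distrib
  by (rule Bochner_Integration.integral_diff [symmetric]) (simp_all add: integrable_Phi_pow_mult_phi)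

lemma conv_prob_zero_if_controlled:
  assumes prob: "\<And>n. prob_space (M n)"
    and Y_meas [measurable]: "\<And>n. Y n \<in> borel_measurable (M n)"
    and Y: "conv_prob_zero M Y"
    and control: "\<And>e. 0 < e \<Longrightarrow> \<exists>\<eta>>0. \<forall>\<^sub>F n in sequentially.
      \<forall>\<omega>\<in>space (M n). \<bar>Y n \<omega>\<bar> \<le> \<eta> \<longrightarrow> \<bar>Z n \<omega>\<bar> \<le> e"
  shows "conv_prob_zero M Z"
  unfolding conv_prob_zero_def
proof (intro allI impI)
  fix e :: real
  assume "0 < e"
  then obtain \<eta> where "0 < \<eta>"
    and controlled: "\<forall>\<^sub>F n in sequentially. \<forall>\<omega>\<in>space (M n). \<bar>Y n \<omega>\<bar> \<le> \<eta> \<longrightarrow> \<bar>Z n \<omega>\<bar> \<le> e"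
    using control by blast
  have Y_small: "(\<lambda>n. measure (M n) {\<omega> \<in> space (M n). \<bar>Y n \<omega>\<bar> > \<eta>}) \<longlonglongrightarrow> 0"
    using Y \<open>0 < \<eta>\<close> unfolding conv_prob_zero_def by blast
  show "(\<lambda>n. measure (M n) {\<omega> \<in> space (M n). \<bar>Z n \<omega>\<bar> > e}) \<longlonglongrightarrow> 0"
  proof (rule tendsto_sandwich [OF _ _ tendsto_const Y_small])
    show "\<forall>\<^sub>F n in sequentially. 0 \<le> measure (M n) {\<omega> \<in> space (M n). \<bar>Z n \<omega>\<bar> > e}"
      by simp
    show "\<forall>\<^sub>F n in sequentially. measure (M n) {\<omega> \<in> space (M n). \<bar>Z n \<omega>\<bar> > e}
        \<le> measure (M n) {\<omega> \<in> space (M n). \<bar>Y n \<omega>\<bar> > \<eta>}"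
      using controlled
    proof eventually_elim
      case (elim n)
      interpret prob_space "M n"
        by (rule prob)
      show ?case
      proof (cases "{\<omega> \<in> space (M n). \<bar>Z n \<omega>\<bar> > e} \<in> sets (M n)")
        case True
        moreover have "{\<omega> \<in> space (M n). \<bar>Z n \<omega>\<bar> > e} \<subseteq> {\<omega> \<in> space (M n). \<bar>Y n \<omega>\<bar> > \<eta>}"
          using elim by (auto simp: not_le [symmetric])
        ultimately show ?thesis
          by (intro finite_measure_mono) simp_all
      qed (simp add: measure_notin_sets)
    qed
  qed
qed

lemma borel_measurable_eq_comp_restrict:
  assumes "\<And>i. i \<in> I \<Longrightarrow> X i \<in> borel_measurable M"
    and [measurable]: "g \<in> borel_measurable (PiM I (\<lambda>_. borel))"
    and f: "\<forall>\<omega>\<in>space M. f \<omega> = g (\<lambda>i\<in>I. X i \<omega>)"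
  shows "f \<in> borel_measurable M"
proof -
  have "(\<lambda>\<omega>. \<lambda>i\<in>I. X i \<omega>) \<in> measurable M (PiM I (\<lambda>_. borel))"
    using assms(1) by (rule measurable_restrict)
  then have "(\<lambda>\<omega>. g (\<lambda>i\<in>I. X i \<omega>)) \<in> borel_measurable M"
    by measurable
  then show ?thesis
    using f by (subst measurable_cong) simp_all
qed

theorem theorem3:
  fixes \<rho> :: real
    and M :: "nat \<Rightarrow> 'a measure"
    and X :: "nat \<Rightarrow> nat \<Rightarrow> 'a \<Rightarrow> real"
    and \<rho>hat :: "nat \<Rightarrow> 'a \<Rightarrow> real"
  assumes rho: "0 < \<rho>" "\<rho> < 1"
    and prob: "\<And>n. prob_space (M n)"
    and X_rv: "\<And>n i. i < n \<Longrightarrow> X n i \<in> borel_measurable (M n)"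
    and X_normal: "\<And>n. jointly_normal (M n) n (X n)"
    and X_mean: "\<And>n i. i < n \<Longrightarrow> integrable (M n) (X n i) \<and> (\<integral>\<omega>. X n i \<omega> \<partial>M n) = 0"
    and X_var: "\<And>n i. i < n \<Longrightarrow> integrable (M n) (\<lambda>\<omega>. (X n i \<omega>)\<^sup>2) \<and> (\<integral>\<omega>. (X n i \<omega>)\<^sup>2 \<partial>M n) = 1"
    and X_corr: "\<And>n i j. i < n \<Longrightarrow> j < n \<Longrightarrow> i \<noteq> j \<Longrightarrow>
                   integrable (M n) (\<lambda>\<omega>. X n i \<omega> * X n j \<omega>) \<and> (\<integral>\<omega>. X n i \<omega> * X n j \<omega> \<partial>M n) = \<rho>"
    and est_meas: "\<And>n. \<exists>g. g \<in> borel_measurable (PiM {..<n} (\<lambda>_. borel)) \<and>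
                     (\<forall>\<omega>\<in>space (M n). \<rho>hat n \<omega> = g (\<lambda>i\<in>{..<n}. X n i \<omega>))"
    and est_range: "\<And>n \<omega>. \<omega> \<in> space (M n) \<Longrightarrow> 0 \<le> \<rho>hat n \<omega> \<and> \<rho>hat n \<omega> < 1"
    and est_consistent: "conv_prob_zero M
          (\<lambda>n \<omega>. sqrt (2 * ln (real n)) * (sqrt (1 - \<rho>) - sqrt (1 - \<rho>hat n \<omega>)))"
  shows "conv_prob_zero M
          (\<lambda>n \<omega>. \<bar>\<integral>x. ((Phi ((x * sqrt \<rho> + Max {X n i \<omega> | i. i < n}) / sqrt (1 - \<rho>))) ^ n
                      - (Phi ((x * sqrt (\<rho>hat n \<omega>) + Max {X n i \<omega> | i. i < n}) / sqrt (1 - \<rho>hat n \<omega>))) ^ n)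
                     * phi x \<partial>lborel\<bar>)"
proof -
  have [measurable]: "\<rho>hat n \<in> borel_measurable (M n)" for n
  proof -
    obtain g where "g \<in> borel_measurable (PiM {..<n} (\<lambda>_. borel))"
      and "\<forall>\<omega>\<in>space (M n). \<rho>hat n \<omega> = g (\<lambda>i\<in>{..<n}. X n i \<omega>)"
      using est_meas [of n] by blast
    with X_rv show ?thesis
      by (rule borel_measurable_eq_comp_restrict [of "{..<n}"]) simp_all
  qed
  show ?thesis
  proof (rule conv_prob_zero_if_controlled [OF prob _ est_consistent], goal_cases)
    case (1 n)
    show ?case
      by measurable
  next
    case (2 e)
    then obtain \<eta> where "0 < \<eta>" and close: "\<forall>\<^sub>F n in sequentially. \<forall>r m. 0 \<le> r \<longrightarrow> r < 1 \<longrightarrow>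
        \<bar>sqrt (2 * ln (real n)) * (sqrt (1 - \<rho>) - sqrt (1 - r))\<bar> \<le> \<eta> \<longrightarrow>
        \<bar>equicorr_max_cdf n \<rho> m - equicorr_max_cdf n r m\<bar> \<le> e"
      using equicorr_max_cdf_uniformly_close [OF rho] by blast
    show ?case
      using \<open>0 < \<eta>\<close> close est_range
      by (intro exI [of _ \<eta>]) (auto simp: equicorr_max_cdf_diff [symmetric] elim!: eventually_mono)
  qed
qed

end
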